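(* Let $h\ge 2$ and let $D$ be a set of positive integers. Suppose there exist an integer $t$ with $2\le t\le 2h-1$ and positive integers $f_1,\dots,f_t$ with $f_1+\dots+f_t\le 2h$ such that $\sup_{m\ge 1} R_{f_1,\dots,f_t,D}(m)=\infty$. Then there exist an integer $t'$ with $2\le t'\le 2h-1$ and positive integers $f'_1,\dots,f'_{t'}$ with $f'_1+\dots+f'_{t'}\le 2h$ such that $\sup_{m\ge 1} R^{\mathrm{Dist}}_{f'_1,\dots,f'_{t'},D}(m)=\infty$.
   Context: For positive integers $f_1,\dots,f_t$, a set $D$ of positive integers and a positive integer $m$, $R_{f_1,\dots,f_t,D}(m)$ is the number of $t$-tuples $(d_1,\dots,d_t)$ of pairwise distinct elements of $D$ with $f_1d_1+\dots+f_td_t=m$, and $R^{\mathrm{Dist}}_{f_1,\dots,f_t,D}(m)$ is the largest integer $q\ge0$ such that there exist $qt$ pairwise distinct elements $d_1,\dots,d_{qt}\in D$ with $f_1d_{jt+1}+\dots+f_td_{jt+t}=m$ for every $0\le j\le q-1$. *)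

theory Defs
  imports Main "HOL-Library.Extended_Nat"
begin

text \<open>Coefficients f_1..f_t are the list f (t = length f); the tuple (d_1..d_t) is a list ds.\<close>

definition R :: "nat list \<Rightarrow> nat set \<Rightarrow> nat \<Rightarrow> nat" where
  "R f D m = card {ds. length ds = length f \<and> distinct ds \<and> set ds \<subseteq> D \<and>
      (\<Sum>i<length f. f ! i * ds ! i) = m}"

definition RDist :: "nat list \<Rightarrow> nat set \<Rightarrow> nat \<Rightarrow> nat" where
  "RDist f D m = (GREATEST q. \<exists>ds. length ds = q * length f \<and> distinct ds \<and> set ds \<subseteq> D \<and>
      (\<forall>j<q. (\<Sum>i<length f. f ! i * ds ! (j * length f + i)) = m))"

end

theory Submission
  imports Defs
begin

text \<open>If \<open>R f D\<close> is unbounded but \<open>RDist f D\<close> stays below \<open>q\<close>, then for each \<open>m\<close> a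
  maximal family of pairwise disjoint solutions of \<open>f\<^sub>1d\<^sub>1 + \<dots> + f\<^sub>td\<^sub>t = m\<close> has fewer
  than \<open>q\<close> members, so a set \<open>U\<close> of fewer than \<open>q t\<close> elements meets every solution. Fixing
  the position \<open>i\<close> and the value \<open>u \<in> U\<close> of such a common entry leaves a solution of the
  equation with \<open>f\<^sub>i\<close> deleted and right-hand side \<open>m - f\<^sub>iu\<close>, which is positive since \<open>D\<close>
  consists of positive integers. So \<open>R f D m\<close> is at most \<open>t \<cdot> q t\<close> times a bound for the
  representation functions of the shortened coefficient lists, and one of those must be unbounded.
  Deleting coefficients decreases \<open>t\<close> and \<open>\<Sum>f\<^sub>i\<close>, and the descent halts at some
  \<open>t \<ge> 2\<close> because \<open>R f D m \<le> 1\<close> when \<open>t \<le> 1\<close>.\<close>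

definition remove_nth :: "nat \<Rightarrow> 'a list \<Rightarrow> 'a list" where
  "remove_nth i xs = take i xs @ drop (Suc i) xs"

lemma length_remove_nth [simp]: "i < length xs \<Longrightarrow> length (remove_nth i xs) = length xs - 1"
  by (simp add: remove_nth_def)

lemma nth_remove_nth:
  "i < length xs \<Longrightarrow> k < length xs - 1 \<Longrightarrow>
    remove_nth i xs ! k = xs ! (if k < i then k else Suc k)"
  by (auto simp: remove_nth_def nth_append min_def)

lemma sum_lessThan_skip:
  fixes a :: "nat \<Rightarrow> 'b::comm_monoid_add"
  assumes "i < n"
  shows "(\<Sum>k<n. a k) = a i + (\<Sum>k<n - 1. a (if k < i then k else Suc k))"
proof -
  let ?skip = "\<lambda>k. if k < i then k else Suc k"
  have "bij_betw ?skip {..<n - 1} ({..<n} - {i})"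
  proof (rule bij_betw_imageI)
    show "inj_on ?skip {..<n - 1}" by (auto simp: inj_on_def split: if_splits)
    show "?skip ` {..<n - 1} = {..<n} - {i}"
    proof (intro equalityI subsetI)
      fix k assume "k \<in> {..<n} - {i}"
      then show "k \<in> ?skip ` {..<n - 1}"
        using assms by (cases "k < i") (auto simp: image_iff intro: bexI[of _ "k - 1"])
    qed (use assms in auto)
  qed
  then have "(\<Sum>k<n - 1. a (?skip k)) = (\<Sum>k\<in>{..<n} - {i}. a k)"
    by (rule sum.reindex_bij_betw)
  then show ?thesis using assms by (simp add: sum.remove)
qed

lemma set_remove_nth_subset: "set (remove_nth i xs) \<subseteq> set xs"
  unfolding remove_nth_def by (metis Un_subset_iff set_append set_drop_subset set_take_subset)

lemma distinct_remove_nth: "distinct xs \<Longrightarrow> distinct (remove_nth i xs)"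
  by (simp add: remove_nth_def set_take_disj_set_drop_if_distinct)

lemma sum_list_remove_nth:
  "i < length xs \<Longrightarrow> sum_list (remove_nth i xs) + xs ! i = sum_list (xs :: nat list)"
  by (subst (3) id_take_nth_drop[of i xs]) (simp_all add: remove_nth_def)

lemma remove_nth_inject:
  assumes "i < length xs" "length xs = length ys" "xs ! i = ys ! i"
    and "remove_nth i xs = remove_nth i ys"
  shows "xs = ys"
proof -
  have "take i xs = take i ys" "drop (Suc i) xs = drop (Suc i) ys"
    using assms unfolding remove_nth_def by (simp_all add: append_eq_append_conv)
  then show ?thesis using assms by (metis id_take_nth_drop)
qed

lemma weighted_sum_remove_nth:
  fixes f ds :: "nat list"
  assumes "length ds = length f" "i < length f"
  shows "(\<Sum>k<length f. f ! k * ds ! k)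
    = f ! i * ds ! i + (\<Sum>k<length f - 1. remove_nth i f ! k * remove_nth i ds ! k)"
proof -
  have "(\<Sum>k<length f - 1. f ! (if k < i then k else Suc k) * ds ! (if k < i then k else Suc k))
      = (\<Sum>k<length f - 1. remove_nth i f ! k * remove_nth i ds ! k)"
    using assms by (intro sum.cong) (simp_all add: nth_remove_nth)
  then show ?thesis by (simp add: sum_lessThan_skip[OF assms(2)])
qed

lemma le_weighted_sum:
  fixes g :: "nat \<Rightarrow> nat"
  assumes "\<forall>c\<in>set f. c > 0" "i < length f"
  shows "g i \<le> (\<Sum>k<length f. f ! k * g k)"
proof -
  have "0 < f ! i" using assms by simp
  then have "g i \<le> f ! i * g i" by simp
  also have "\<dots> \<le> (\<Sum>k<length f. f ! k * g k)"
    using assms(2) by (intro member_le_sum) auto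
  finally show ?thesis .
qed

definition solutions :: "nat list \<Rightarrow> nat set \<Rightarrow> nat \<Rightarrow> nat list set" where
  "solutions f D m = {ds. length ds = length f \<and> distinct ds \<and> set ds \<subseteq> D \<and>
      (\<Sum>i<length f. f ! i * ds ! i) = m}"

lemma R_eq_card_solutions: "R f D m = card (solutions f D m)"
  by (simp add: R_def solutions_def)

lemma set_solution_subset_atMost:
  assumes "\<forall>c\<in>set f. c > 0" "ds \<in> solutions f D m"
  shows "set ds \<subseteq> {..m}"
proof
  fix x assume "x \<in> set ds"
  then obtain k where "k < length f" "x = ds ! k"
    using assms(2) by (auto simp: solutions_def in_set_conv_nth)
  then have "x \<le> (\<Sum>i<length f. f ! i * ds ! i)" using le_weighted_sum[OF assms(1)] by simp
  with assms(2) show "x \<in> {..m}" by (simp add: solutions_def)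
qed

lemma finite_solutions:
  assumes "\<forall>c\<in>set f. c > 0"
  shows "finite (solutions f D m)"
proof (rule finite_subset)
  show "solutions f D m \<subseteq> {ds. set ds \<subseteq> {..m} \<and> length ds \<le> length f}"
    using set_solution_subset_atMost[OF assms] by (auto simp: solutions_def)
qed (simp add: finite_lists_length_le)

lemma solutions_zero:
  assumes "\<forall>c\<in>set f. c > 0" "\<forall>d\<in>D. d > 0" "f \<noteq> []"
  shows "solutions f D 0 = {}"
proof safe
  fix ds assume ds: "ds \<in> solutions f D 0"
  then have "ds ! 0 \<in> D" using assms(3) by (auto simp: solutions_def)
  then have "0 < ds ! 0" using assms(2) by simp
  also have "\<dots> \<le> (\<Sum>i<length f. f ! i * ds ! i)" using le_weighted_sum[OF assms(1)] assms(3) by simp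
  finally show "ds \<in> {}" using ds by (simp add: solutions_def del: sum_eq_0_iff)
qed

lemma card_solutions_le_one:
  assumes "\<forall>c\<in>set f. c > 0" "length f \<le> 1"
  shows "card (solutions f D m) \<le> 1"
proof -
  have "ds = ds'" if "ds \<in> solutions f D m" "ds' \<in> solutions f D m" for ds ds'
  proof (cases f)
    case (Cons c f')
    then have "f = [c]" "c > 0" using assms by auto
    then show ?thesis using that by (auto simp: solutions_def length_Suc_conv)
  qed (use that in \<open>simp add: solutions_def\<close>)
  then show ?thesis by (simp add: card_le_Suc0_iff_eq finite_solutions[OF assms(1)])
qed

lemma remove_nth_mem_solutions:
  assumes "ds \<in> solutions f D m" "i < length f"
  shows "remove_nth i ds \<in> solutions (remove_nth i f) D (m - f ! i * ds ! i)"
proof -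
  have ds: "length ds = length f" "distinct ds" "set ds \<subseteq> D" "(\<Sum>k<length f. f ! k * ds ! k) = m"
    using assms(1) unfolding solutions_def by blast+
  have "length (remove_nth i ds) = length (remove_nth i f)" using ds(1) assms(2) by simp
  moreover have "set (remove_nth i ds) \<subseteq> D" using set_remove_nth_subset ds(3) by (rule order_trans)
  moreover have "(\<Sum>k<length (remove_nth i f). remove_nth i f ! k * remove_nth i ds ! k)
      = m - f ! i * ds ! i"
    using weighted_sum_remove_nth[OF ds(1) assms(2)] ds(4) assms(2) by simp
  ultimately show ?thesis
    using distinct_remove_nth[OF ds(2)] unfolding solutions_def by blast
qed

lemma card_solutions_fixed_entry_le:
  assumes "\<forall>c\<in>set f. c > 0" "i < length f"
  shows "card {ds \<in> solutions f D m. ds ! i = d} \<le> R (remove_nth i f) D (m - f ! i * d)"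
  unfolding R_eq_card_solutions
proof (rule card_inj_on_le)
  show "inj_on (remove_nth i) {ds \<in> solutions f D m. ds ! i = d}"
  proof (rule inj_onI)
    fix ds ds'
    assume "ds \<in> {ds \<in> solutions f D m. ds ! i = d}" "ds' \<in> {ds \<in> solutions f D m. ds ! i = d}"
      and removed: "remove_nth i ds = remove_nth i ds'"
    then have "length ds = length f" "length ds' = length f" "ds ! i = ds' ! i"
      unfolding solutions_def by auto
    with removed show "ds = ds'" using assms(2) remove_nth_inject[of i ds ds'] by argo
  qed
  show "remove_nth i ` {ds \<in> solutions f D m. ds ! i = d}
      \<subseteq> solutions (remove_nth i f) D (m - f ! i * d)"
    using remove_nth_mem_solutions[OF _ assms(2)] by blast
  have "\<forall>c\<in>set (remove_nth i f). c > 0" using assms(1) set_remove_nth_subset[of i f] by blast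
  then show "finite (solutions (remove_nth i f) D (m - f ! i * d))" by (rule finite_solutions)
qed

lemma length_concat_equal_length:
  "\<forall>xs\<in>set F. length xs = t \<Longrightarrow> length (concat F) = length F * t"
  by (induction F) auto

lemma nth_concat_equal_length:
  "\<forall>xs\<in>set F. length xs = t \<Longrightarrow> j < length F \<Longrightarrow> i < t \<Longrightarrow> concat F ! (j * t + i) = F ! j ! i"
proof (induction F arbitrary: j)
  case (Cons xs F)
  then show ?case by (cases j) (auto simp: nth_append)
qed simp

lemma RDist_witness_bound:
  assumes "\<forall>c\<in>set f. c > 0" "f \<noteq> []" "length ds = q * length f" "distinct ds"
    and blocks: "\<forall>j<q. (\<Sum>i<length f. f ! i * ds ! (j * length f + i)) = m"
  shows "q \<le> m + 1"
proof -
  let ?t = "length f"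
  have "set ds \<subseteq> {..m}"
  proof
    fix x assume "x \<in> set ds"
    then obtain k where k: "k < q * ?t" "x = ds ! k" using assms(3) by (auto simp: in_set_conv_nth)
    have "k div ?t < q" "k mod ?t < ?t" using k(1) assms(2) by (simp_all add: less_mult_imp_div_less)
    then have "ds ! (k div ?t * ?t + k mod ?t) \<le> m"
      using le_weighted_sum[OF assms(1), of "k mod ?t" "\<lambda>i. ds ! (k div ?t * ?t + i)"] blocks by simp
    then show "x \<in> {..m}" using k(2) by simp
  qed
  then have "card (set ds) \<le> m + 1" using card_mono[of "{..m}"] by fastforce
  moreover have "q \<le> q * ?t" using assms(2) by (simp add: Suc_le_eq)
  ultimately show ?thesis using assms(3,4) distinct_card[of ds] by linarith
qed

lemma length_le_RDist:
  assumes pos: "\<forall>c\<in>set f. c > 0" and "f \<noteq> []"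
    and F: "set F \<subseteq> solutions f D m" "distinct (concat F)"
  shows "length F \<le> RDist f D m"
  unfolding RDist_def
proof (rule Greatest_le_nat[where b = "m + 1"])
  let ?t = "length f"
  have lengths: "\<forall>xs\<in>set F. length xs = ?t" using F(1) by (auto simp: solutions_def)
  show "\<exists>ds. length ds = length F * ?t \<and> distinct ds \<and> set ds \<subseteq> D \<and>
      (\<forall>j<length F. (\<Sum>i<?t. f ! i * ds ! (j * ?t + i)) = m)"
  proof (intro exI conjI allI impI)
    show "length (concat F) = length F * ?t" using lengths by (rule length_concat_equal_length)
    show "set (concat F) \<subseteq> D" using F(1) by (auto simp: solutions_def)
    fix j assume j: "j < length F"
    then have "F ! j \<in> solutions f D m" using F(1) by auto
    then show "(\<Sum>i<?t. f ! i * concat F ! (j * ?t + i)) = m"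
      using nth_concat_equal_length[OF lengths j] by (simp add: solutions_def)
  qed fact
qed (use RDist_witness_bound[OF assms(1,2)] in blast)

text \<open>\<open>distinct (concat F)\<close> says that the lists in \<open>F\<close> are repetition-free and pairwise
  disjoint; for solution lists this is exactly a witness in the definition of \<open>RDist\<close>.\<close>

lemma disjoint_lists_or_hitting_set:
  assumes X: "\<forall>xs\<in>X. distinct xs \<and> length xs \<le> t"
  shows "(\<exists>F. length F = k \<and> set F \<subseteq> X \<and> distinct (concat F)) \<or>
    (\<exists>U. finite U \<and> card U \<le> k * t \<and> (\<forall>xs\<in>X. set xs \<inter> U \<noteq> {}))"
proof (induction k)
  case 0
  show ?case by simp
next
  case (Suc k)
  then show ?case
  proof
    assume "\<exists>F. length F = k \<and> set F \<subseteq> X \<and> distinct (concat F)"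
    then obtain F where F: "length F = k" "set F \<subseteq> X" "distinct (concat F)" by blast
    have "length (concat F) \<le> length F * t" using F(2) X by (induction F) auto
    then have card_U: "card (set (concat F)) \<le> k * t" using F(1) card_length order_trans by blast
    show ?case
    proof (cases "\<forall>xs\<in>X. set xs \<inter> set (concat F) \<noteq> {}")
      case True
      then show ?thesis using card_U by (intro disjI2 exI[of _ "set (concat F)"]) auto
    next
      case False
      then obtain xs where "xs \<in> X" "set xs \<inter> set (concat F) = {}" by blast
      then show ?thesis using F X by (intro disjI1 exI[of _ "xs # F"]) auto
    qed
  next
    assume "\<exists>U. finite U \<and> card U \<le> k * t \<and> (\<forall>xs\<in>X. set xs \<inter> U \<noteq> {})"
    then show ?case by auto
  qed
qed

lemma R_le_if_RDist_bounded:
  assumes pos: "\<forall>c\<in>set f. c > 0" and D: "\<forall>d\<in>D. d > 0" and "2 \<le> length f"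
    and "RDist f D m < q"
    and removed: "\<forall>i<length f. \<forall>m'\<ge>1. R (remove_nth i f) D m' \<le> N"
  shows "R f D m \<le> length f * (q * length f * N)"
proof -
  let ?t = "length f"
  let ?S = "solutions f D m"
  have "f \<noteq> []" using assms(3) by auto
  have "\<forall>ds\<in>?S. distinct ds \<and> length ds \<le> ?t" by (simp add: solutions_def)
  moreover have "\<not> (\<exists>F. length F = q \<and> set F \<subseteq> ?S \<and> distinct (concat F))"
  proof
    assume "\<exists>F. length F = q \<and> set F \<subseteq> ?S \<and> distinct (concat F)"
    then obtain F where "length F = q" "set F \<subseteq> ?S" "distinct (concat F)" by blast
    then have "q \<le> RDist f D m" using length_le_RDist[OF pos \<open>f \<noteq> []\<close>, of F D m] by simp
    with assms(4) show False by simp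
  qed
  ultimately obtain U where U: "finite U" "card U \<le> q * ?t" "\<forall>ds\<in>?S. set ds \<inter> U \<noteq> {}"
    using disjoint_lists_or_hitting_set[of ?S ?t q] by blast
  have fixed_entry: "card {ds \<in> ?S. ds ! i = d} \<le> N" if i: "i < ?t" for i d
  proof (cases "m - f ! i * d = 0")
    case True
    have "length (remove_nth i f) \<noteq> 0" using i assms(3) by simp
    then have "remove_nth i f \<noteq> []" by auto
    moreover have "\<forall>c\<in>set (remove_nth i f). c > 0" using pos set_remove_nth_subset[of i f] by blast
    ultimately have "R (remove_nth i f) D (m - f ! i * d) = 0"
      using True solutions_zero[OF _ D] by (simp add: R_eq_card_solutions)
    then show ?thesis using card_solutions_fixed_entry_le[OF pos i, of D m d] by simp
  next
    case False
    then show ?thesis using card_solutions_fixed_entry_le[OF pos i, of D m d] removed i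
      by (meson le_trans less_one not_le)
  qed
  have "?S \<subseteq> (\<Union>i<?t. \<Union>d\<in>U. {ds \<in> ?S. ds ! i = d})"
  proof
    fix ds assume ds: "ds \<in> ?S"
    then obtain x where "x \<in> set ds" "x \<in> U" using U(3) by blast
    moreover have "length ds = ?t" using ds by (simp add: solutions_def)
    ultimately obtain i where "i < ?t" "ds ! i \<in> U" by (metis in_set_conv_nth)
    with ds show "ds \<in> (\<Union>i<?t. \<Union>d\<in>U. {ds \<in> ?S. ds ! i = d})" by blast
  qed
  then have "R f D m \<le> card (\<Union>i<?t. \<Union>d\<in>U. {ds \<in> ?S. ds ! i = d})"
    unfolding R_eq_card_solutions by (intro card_mono) (simp_all add: U(1) finite_solutions[OF pos])
  also have "\<dots> \<le> (\<Sum>i<?t. \<Sum>d\<in>U. card {ds \<in> ?S. ds ! i = d})"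
    by (intro order_trans[OF card_UN_le] sum_mono card_UN_le) (simp_all add: U(1))
  also have "\<dots> \<le> (\<Sum>i<?t. \<Sum>d\<in>U. N)"
    using fixed_entry by (intro sum_mono) auto
  also have "\<dots> = ?t * (card U * N)" by simp
  also have "\<dots> \<le> ?t * (q * ?t * N)" using U(2) by (intro mult_le_mono2 mult_le_mono1)
  finally show ?thesis .
qed

lemma SUP_enat_eq_infinity_iff: "(SUP m\<in>A. enat (g m)) = \<infinity> \<longleftrightarrow> \<not> bdd_above (g ` A)"
proof -
  have SUP_eq: "(SUP m\<in>A. enat (g m)) = Sup (enat ` g ` A)" by (simp add: image_comp)
  show ?thesis
  proof (cases "finite (g ` A)")
    case True
    have "Sup (enat ` g ` A) \<noteq> \<infinity>"
    proof (cases "A = {}")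
      case False
      then have "Max (enat ` g ` A) \<in> enat ` g ` A" using True by (intro Max_in) auto
      then show ?thesis using True by (auto simp: Sup_enat_def)
    qed (simp add: Sup_enat_def)
    then show ?thesis using True by (simp add: SUP_eq bdd_above_nat)
  next
    case False
    then have "infinite (enat ` g ` A)" by (meson enat.inject finite_imageD inj_onI)
    moreover have "enat ` g ` A \<noteq> {}" using False by auto
    ultimately have "Sup (enat ` g ` A) = \<infinity>" unfolding Sup_enat_def by argo
    then show ?thesis using False by (simp add: SUP_eq bdd_above_nat)
  qed
qed

lemma exists_remove_nth_R_unbounded:
  assumes pos: "\<forall>c\<in>set f. c > 0" and D: "\<forall>d\<in>D. d > 0" and "2 \<le> length f"
    and RDist_bdd: "bdd_above (RDist f D ` {1..})" and R_unbdd: "\<not> bdd_above (R f D ` {1..})"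
  shows "\<exists>i<length f. \<not> bdd_above (R (remove_nth i f) D ` {1..})"
proof (rule ccontr)
  assume "\<not> ?thesis"
  then have "bdd_above (\<Union>i<length f. R (remove_nth i f) D ` {1..})" by simp
  then obtain N where "\<forall>x\<in>(\<Union>i<length f. R (remove_nth i f) D ` {1..}). x \<le> N"
    unfolding bdd_above_def by blast
  then have N: "\<forall>i<length f. \<forall>m'\<ge>1. R (remove_nth i f) D m' \<le> N" by auto
  obtain q where "\<forall>m\<ge>1. RDist f D m < q"
    using RDist_bdd unfolding bdd_above_def by (meson atLeast_iff image_eqI le_imp_less_Suc)
  then have "\<forall>m\<ge>1. R f D m \<le> length f * (q * length f * N)"
    using R_le_if_RDist_bounded[OF pos D assms(3) _ N] by blast
  with R_unbdd show False by (auto simp: bdd_above_def)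
qed

lemma R_unbounded_imp_RDist_unbounded:
  assumes D: "\<forall>d\<in>D. d > 0"
  shows "\<forall>c\<in>set f. c > 0 \<Longrightarrow> \<not> bdd_above (R f D ` {1..}) \<Longrightarrow>
    \<exists>f'. 2 \<le> length f' \<and> length f' \<le> length f \<and> sum_list f' \<le> sum_list f \<and>
      (\<forall>c\<in>set f'. c > 0) \<and> \<not> bdd_above (RDist f' D ` {1..})"
proof (induction f rule: measure_induct_rule[where f = length])
  case (less f)
  have "2 \<le> length f"
  proof (rule ccontr)
    assume "\<not> 2 \<le> length f"
    then have "R f D m \<le> 1" for m
      using card_solutions_le_one[OF less.prems(1)] by (simp add: R_eq_card_solutions)
    then have "bdd_above (R f D ` {1..})" by (rule bdd_aboveI2)
    with less.prems(2) show False by contradiction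
  qed
  show ?case
  proof (cases "bdd_above (RDist f D ` {1..})")
    case True
    then obtain i where i: "i < length f" "\<not> bdd_above (R (remove_nth i f) D ` {1..})"
      using exists_remove_nth_R_unbounded[OF less.prems(1) D \<open>2 \<le> length f\<close> True less.prems(2)]
      by auto
    have pos: "\<forall>c\<in>set (remove_nth i f). c > 0" using less.prems(1) set_remove_nth_subset[of i f] by blast
    have shorter: "length (remove_nth i f) < length f" using i(1) by simp
    have smaller: "sum_list (remove_nth i f) \<le> sum_list f" using sum_list_remove_nth[OF i(1)] by linarith
    obtain f' where "2 \<le> length f'" "length f' \<le> length (remove_nth i f)"
      "sum_list f' \<le> sum_list (remove_nth i f)" "\<forall>c\<in>set f'. c > 0"
      "\<not> bdd_above (RDist f' D ` {1..})"
      using less.IH[OF shorter pos i(2)] by auto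
    with smaller shorter show ?thesis by (intro exI[of _ f']) simp
  next
    case False
    with \<open>2 \<le> length f\<close> less.prems(1) show ?thesis by (intro exI[of _ f]) simp
  qed
qed

theorem mainTheorem9:
  fixes h :: nat and D :: "nat set"
  assumes "h \<ge> 2"
    and "\<forall>d\<in>D. d > 0"
    and "\<exists>f. 2 \<le> length f \<and> length f \<le> 2 * h - 1 \<and> (\<forall>x\<in>set f. x > 0) \<and>
           sum_list f \<le> 2 * h \<and> (SUP m\<in>{1..}. enat (R f D m)) = \<infinity>"
  shows "\<exists>f'. 2 \<le> length f' \<and> length f' \<le> 2 * h - 1 \<and> (\<forall>x\<in>set f'. x > 0) \<and>
           sum_list f' \<le> 2 * h \<and> (SUP m\<in>{1..}. enat (RDist f' D m)) = \<infinity>"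
proof -
  obtain f where f: "length f \<le> 2 * h - 1" "\<forall>c\<in>set f. c > 0" "sum_list f \<le> 2 * h"
    "\<not> bdd_above (R f D ` {1..})"
    using assms(3) by (auto simp: SUP_enat_eq_infinity_iff)
  then obtain f' where "2 \<le> length f'" "length f' \<le> length f" "sum_list f' \<le> sum_list f"
    "\<forall>c\<in>set f'. c > 0" "\<not> bdd_above (RDist f' D ` {1..})"
    using R_unbounded_imp_RDist_unbounded[OF assms(2) f(2,4)] by auto
  with f show ?thesis by (intro exI[of _ f']) (auto simp: SUP_enat_eq_infinity_iff)
qed

end
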